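(* Let $A\in\{0,1\}$ be a binary exposure and $M_1,\dots,M_K$ binary mediators ($K\ge 1$) whose causal dependencies among themselves form an arbitrary directed acyclic graph $G$. For each mediator $M_k$ and each $a\in\{0,1\}$ let $M_k(a)\in\{0,1\}$ denote its potential value, defined recursively by $M_k(a)=M_k\big(a,\mathrm{Pa}\{M_k\}(a)\big)$, where $\mathrm{Pa}\{M_k\}(a)=\{M_j(a)\}_{j\in \text{parents of }M_k\text{ in }G}$ (if $M_k$ has no parent mediator this is simply $M_k(a)$). Let $Y(a,m_1,\dots,m_K)$ denote the potential outcome (real-valued) when $A$ is set to $a$ and the mediators are set to $m_1,\dots,m_K$, and write $Y(a)=Y\big(a,M_1(a),\dots,M_K(a)\big)$. Define the total effect $\mathrm{TE}=Y(1)-Y(0)$ and, for $k=1,\dots,K$, $a,m\in\{0,1\}$, $$Y_k(a,m)=Y\big(a,M_1(a),\dots,M_{k-1}(a),m,M_{k+1}(a),\dots,M_K(a)\big),$$ $$\mathrm{CDE}_k(0)=Y_k(1,0)-Y_k(0,0),\qquad \mathrm{CIE}_k(a)=Y_k(a,1)-Y_k(a,0),$$ $$\mathrm{sCIE}_k=M_k(1)\,\mathrm{CIE}_k(1)-M_k(0)\,\mathrm{CIE}_k(0).$$ Then for every $k=1,\dots,K$, $$\mathrm{TE}=\mathrm{CDE}_k(0)+\mathrm{sCIE}_k .$$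
   Context: Potential-outcomes (counterfactual) framework for mediation analysis with binary exposure and binary mediators. $\mathrm{CDE}_k(0)$ is called the controlled direct effect for the $k$-th mediator, $\mathrm{CIE}_k(a)$ the controlled indirect effect, and $\mathrm{sCIE}_k$ the scaled controlled indirect effect. *)

theory Defs
  imports Complex_Main
begin

(* Binary values are encoded as bool (False = 0, True = 1); of_bool turns them into reals.
   Mediators are indexed by 1..K.  A mediator vector is a function nat => bool
   (only the entries 1..K are meaningful).
   Y a m   : potential outcome Y(a, m_1, ..., m_K)
   M k a   : potential mediator value M_k(a)
   Mprim k a pa : primitive potential value M_k(a, Pa{M_k} = pa) *)

definition parent_vals :: "(nat \<times> nat) set \<Rightarrow> (nat \<Rightarrow> bool \<Rightarrow> bool) \<Rightarrow> nat \<Rightarrow> bool \<Rightarrow> (nat \<Rightarrow> bool)" where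
  "parent_vals G M k a = (\<lambda>j. if (j, k) \<in> G then M j a else False)"

definition Yobs :: "(bool \<Rightarrow> (nat \<Rightarrow> bool) \<Rightarrow> real) \<Rightarrow> (nat \<Rightarrow> bool \<Rightarrow> bool) \<Rightarrow> bool \<Rightarrow> real" where
  "Yobs Y M a = Y a (\<lambda>j. M j a)"

definition Yk :: "(bool \<Rightarrow> (nat \<Rightarrow> bool) \<Rightarrow> real) \<Rightarrow> (nat \<Rightarrow> bool \<Rightarrow> bool) \<Rightarrow> nat \<Rightarrow> bool \<Rightarrow> bool \<Rightarrow> real" where
  "Yk Y M k a m = Y a ((\<lambda>j. M j a)(k := m))"

definition TE :: "(bool \<Rightarrow> (nat \<Rightarrow> bool) \<Rightarrow> real) \<Rightarrow> (nat \<Rightarrow> bool \<Rightarrow> bool) \<Rightarrow> real" where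
  "TE Y M = Yobs Y M True - Yobs Y M False"

definition CDE0 :: "(bool \<Rightarrow> (nat \<Rightarrow> bool) \<Rightarrow> real) \<Rightarrow> (nat \<Rightarrow> bool \<Rightarrow> bool) \<Rightarrow> nat \<Rightarrow> real" where
  "CDE0 Y M k = Yk Y M k True False - Yk Y M k False False"

definition CIE :: "(bool \<Rightarrow> (nat \<Rightarrow> bool) \<Rightarrow> real) \<Rightarrow> (nat \<Rightarrow> bool \<Rightarrow> bool) \<Rightarrow> nat \<Rightarrow> bool \<Rightarrow> real" where
  "CIE Y M k a = Yk Y M k a True - Yk Y M k a False"

definition sCIE :: "(bool \<Rightarrow> (nat \<Rightarrow> bool) \<Rightarrow> real) \<Rightarrow> (nat \<Rightarrow> bool \<Rightarrow> bool) \<Rightarrow> nat \<Rightarrow> real" where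
  "sCIE Y M k = of_bool (M k True) * CIE Y M k True - of_bool (M k False) * CIE Y M k False"

end

theory Submission
  imports Defs
begin

(* The decomposition is a pointwise identity: Y(a) = Y_k(a, M_k(a)), and since M_k(a) is binary,
   Y_k(a, M_k(a)) = Y_k(a, 0) + M_k(a) CIE_k(a).  Subtracting the cases a = 1 and a = 0 gives
   TE = CDE_k(0) + sCIE_k. *)

lemma Yobs_eq_Yk_own_value: "Yobs Y M a = Yk Y M k a (M k a)"
  unfolding Yobs_def Yk_def by (metis fun_upd_triv)

lemma Yk_eq_Yk_False_plus_CIE: "Yk Y M k a m = Yk Y M k a False + of_bool m * CIE Y M k a"
  unfolding CIE_def by (cases m) simp_all

lemma TE_eq_CDE0_plus_sCIE: "TE Y M = CDE0 Y M k + sCIE Y M k"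
  unfolding TE_def CDE0_def sCIE_def Yobs_eq_Yk_own_value[where k = k]
  by (simp add: Yk_eq_Yk_False_plus_CIE[of _ _ k _ "M k _"])

theorem mainTheorem1:
  fixes K :: nat
    and G :: "(nat \<times> nat) set"
    and Mprim :: "nat \<Rightarrow> bool \<Rightarrow> (nat \<Rightarrow> bool) \<Rightarrow> bool"
    and M :: "nat \<Rightarrow> bool \<Rightarrow> bool"
    and Y :: "bool \<Rightarrow> (nat \<Rightarrow> bool) \<Rightarrow> real"
    and k :: nat
  assumes "K \<ge> 1"
    and "G \<subseteq> {1..K} \<times> {1..K}"
    and "acyclic G"
    and "\<And>j a. j \<in> {1..K} \<Longrightarrow> M j a = Mprim j a (parent_vals G M j a)"
    and "k \<in> {1..K}"
  shows "TE Y M = CDE0 Y M k + sCIE Y M k"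
  by (rule TE_eq_CDE0_plus_sCIE)

end
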